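(* For $W>0$ let $X_W\sim\operatorname{IG}(W^{-1},1)$. Then $E[X_W^\alpha]\le W^{-\alpha}$ for $\alpha\in[0,1]$; and for $\alpha\in[0,\frac12)$, $E[X_W^\alpha]\le C_\alpha$ and $\lim_{W\downarrow0}E[X_W^\alpha]=C_\alpha$, where $C_\alpha:=2^{-\alpha}\Gamma(\frac12-\alpha)/\sqrt\pi$.
   Context: $\operatorname{IG}(\mu,\lambda)$, $\mu,\lambda>0$, denotes the inverse Gaussian distribution with density $f(x)=\sqrt{\frac{\lambda}{2\pi x^3}}\exp\big(-\frac{\lambda(x-\mu)^2}{2\mu^2x}\big)$, $x>0$. *)

theory Defs
  imports "HOL-Analysis.Analysis"
begin

definition ig_density :: "real \<Rightarrow> real \<Rightarrow> real \<Rightarrow> real" where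
  "ig_density mu lam x =
     (if x > 0 then sqrt (lam / (2 * pi * x ^ 3)) * exp (- (lam * (x - mu)\<^sup>2) / (2 * mu\<^sup>2 * x))
      else 0)"

definition IG :: "real \<Rightarrow> real \<Rightarrow> real measure" where
  "IG mu lam = density lborel (\<lambda>x. ennreal (ig_density mu lam x))"

definition C_const :: "real \<Rightarrow> real" where
  "C_const \<alpha> = 2 powr (- \<alpha>) * Gamma (1/2 - \<alpha>) / sqrt pi"

end

theory Submission
  imports Defs "HOL-Probability.Probability"
begin

(*
  Write f_W for the density of IG(1/W, 1). It is the Levy density l(x) = exp(-1/(2x)) / sqrt(2 pi x^3)
  tilted by exp(W - W^2 x / 2). Under t = 1/sqrt x - W sqrt x,
  (1 + W x) f_W(x) dx becomes 2 exp(-t^2/2) dt / sqrt(2 pi), and the inversion x = 1/(W^2 y) turns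
  f_W(x) dx into W y f_W(y) dy; hence f_W has mass 1 and mean 1/W. Integrating the tangent line of the
  concave function x^alpha at the mean gives the bound W^(-alpha) (Jensen). For 0 < V <= W the
  difference f_W - f_V changes sign once, at 2/(W+V), and integrates to 0, so the moments decrease in W.
  As W -> 0 they converge by dominated convergence to the moment of l, which the inversion x = 1/(2y)
  turns into a Gamma integral equal to C_alpha; by monotonicity this limit is also an upper bound.
*)

definition levy_density :: "real \<Rightarrow> real" where
  "levy_density x = exp (- 1 / (2 * x)) / (sqrt (2 * pi) * x * sqrt x)"

lemma ig_density_eq_tilted_levy:
  assumes "W > 0" "x > 0"
  shows "ig_density (1/W) 1 x = exp (W - W\<^sup>2 * x / 2) * levy_density x"
proof -
  have "exp (- (1 * (x - 1 / W))\<^sup>2 / (2 * (1 / W)\<^sup>2 * x)) = exp (W - W\<^sup>2 * x / 2) * exp (- 1 / (2 * x))"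
    using assms by (simp add: exp_add[symmetric] field_simps power2_eq_square)
  moreover have "sqrt (1 / (2 * pi * x ^ 3)) = 1 / (sqrt (2 * pi) * x * sqrt x)"
    using assms by (simp add: real_sqrt_mult real_sqrt_divide power3_eq_cube)
  ultimately show ?thesis
    using assms by (simp add: ig_density_def levy_density_def)
qed

lemma ig_density_reflect:
  assumes "W > 0" "x > 0"
  shows "ig_density (1/W) 1 (1 / (W\<^sup>2 * x)) = (W * x) ^ 3 * ig_density (1/W) 1 x"
  using assms
  by (simp add: ig_density_eq_tilted_levy levy_density_def real_sqrt_divide real_sqrt_mult
      field_simps power2_eq_square power3_eq_cube mult_exp_exp)

lemma ig_density_nonneg: "0 \<le> lam \<Longrightarrow> 0 \<le> ig_density mu lam x"
  by (simp add: ig_density_def)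

lemma borel_measurable_ig_density [measurable]: "ig_density mu lam \<in> borel_measurable borel"
  unfolding ig_density_def by measurable

lemma has_bochner_integral_IG:
  fixes h :: "real \<Rightarrow> real"
  assumes lam: "0 \<le> lam" and [measurable]: "h \<in> borel_measurable borel"
    and int: "(\<lambda>x. ig_density mu lam x * h x) absolutely_integrable_on {0<..}"
  shows "has_bochner_integral (IG mu lam) h (integral {0<..} (\<lambda>x. ig_density mu lam x * h x))"
proof -
  let ?f = "ig_density mu lam"
  have vanish: "indicator {0<..} x * (?f x * h x) = ?f x * h x" for x
    by (simp add: indicator_def ig_density_def)
  have "integrable lebesgue (\<lambda>x. ?f x * h x)"
    using int by (simp add: set_integrable_def vanish)
  then have "integrable lborel (\<lambda>x. ?f x * h x)"
    by (subst (asm) integrable_completion) auto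
  moreover have "(\<integral>x. ?f x * h x \<partial>lborel) = integral {0<..} (\<lambda>x. ?f x * h x)"
    using integral_completion[of "\<lambda>x. ?f x * h x" lborel] set_lebesgue_integral_eq_integral(2)[OF int]
    by (simp add: set_lebesgue_integral_def vanish)
  ultimately show ?thesis
    unfolding IG_def using lam
    by (intro has_bochner_integral_density) (auto simp: has_bochner_integral_iff ig_density_nonneg)
qed

lemma has_integral_exp_neg_square_half: "((\<lambda>t::real. exp (- t\<^sup>2 / 2)) has_integral sqrt (2 * pi)) UNIV"
proof -
  have "has_bochner_integral lborel (\<lambda>t. sqrt (2 * pi) * std_normal_density t) (sqrt (2 * pi))"
    using has_bochner_integral_mult_right[OF std_normal_moment_even[of 0]] by simp
  then show ?thesis
    by (auto simp: std_normal_density_def has_bochner_integral_iff dest: has_integral_integral_lborel)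
qed

lemma has_absolute_integral_inversion:
  fixes f :: "real \<Rightarrow> real"
  assumes "c > 0"
  shows "(\<lambda>y. c / y\<^sup>2 * f (c / y)) absolutely_integrable_on {0<..} \<and>
           integral {0<..} (\<lambda>y. c / y\<^sup>2 * f (c / y)) = b
     \<longleftrightarrow> f absolutely_integrable_on {0<..} \<and> integral {0<..} f = b"
proof -
  have "((\<lambda>y. c / y) has_field_derivative - c / y\<^sup>2) (at y within {0<..})" if "y \<in> {0<..}" for y
    using that by (auto intro!: derivative_eq_intros simp: power2_eq_square)
  moreover have "inj_on (\<lambda>y. c / y) {0<..}"
    using assms by (auto simp: inj_on_def)
  moreover have "(\<lambda>y. c / y) ` {0<..} = {0<..}"
  proof (intro set_eqI iffI)
    fix x :: real assume "x \<in> {0<..}"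
    then show "x \<in> (\<lambda>y. c / y) ` {0<..}"
      using assms by (intro image_eqI[of _ _ "c / x"]) auto
  qed (use assms in auto)
  ultimately show ?thesis
    using has_absolute_integral_change_of_variables_1'[of "{0<..}" "\<lambda>y. c / y" "\<lambda>y. - c / y\<^sup>2" f b] assms
    by simp
qed

lemma has_integral_iff_absolutely_integrable_nonneg:
  fixes f :: "'a::euclidean_space \<Rightarrow> real"
  assumes "\<And>x. x \<in> S \<Longrightarrow> 0 \<le> f x"
  shows "f absolutely_integrable_on S \<and> integral S f = b \<longleftrightarrow> (f has_integral b) S"
  using absolutely_integrable_on_iff_nonneg[of S f] assms by (auto simp: has_integral_iff)

lemma has_integral_inversion_nonneg:
  fixes f :: "real \<Rightarrow> real"
  assumes "c > 0" and "\<And>x. x > 0 \<Longrightarrow> 0 \<le> f x"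
  shows "((\<lambda>y. c / y\<^sup>2 * f (c / y)) has_integral b) {0<..} \<longleftrightarrow> (f has_integral b) {0<..}"
proof -
  have "(\<lambda>y. c / y\<^sup>2 * f (c / y)) absolutely_integrable_on {0<..} \<and>
          integral {0<..} (\<lambda>y. c / y\<^sup>2 * f (c / y)) = b
     \<longleftrightarrow> ((\<lambda>y. c / y\<^sup>2 * f (c / y)) has_integral b) {0<..}"
    by (rule has_integral_iff_absolutely_integrable_nonneg) (use assms in auto)
  moreover have "f absolutely_integrable_on {0<..} \<and> integral {0<..} f = b \<longleftrightarrow> (f has_integral b) {0<..}"
    by (rule has_integral_iff_absolutely_integrable_nonneg) (use assms in auto)
  ultimately show ?thesis
    using has_absolute_integral_inversion[OF \<open>c > 0\<close>, of f b] by blast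
qed

lemma bij_betw_inv_sqrt_minus_sqrt:
  assumes W: "W > 0"
  shows "bij_betw (\<lambda>x. 1 / sqrt x - W * sqrt x) {0<..} UNIV"
proof (rule bij_betw_imageI)
  show "inj_on (\<lambda>x. 1 / sqrt x - W * sqrt x) {0<..}"
  proof (rule linorder_inj_onI)
    fix x y :: real assume "x < y" "x \<in> {0<..}"
    then have "sqrt x < sqrt y" "1 / sqrt y < 1 / sqrt x"
      by (auto simp: divide_strict_left_mono)
    then show "1 / sqrt x - W * sqrt x \<noteq> 1 / sqrt y - W * sqrt y"
      using W by (smt (verit) mult_strict_left_mono)
  qed auto
  show "(\<lambda>x. 1 / sqrt x - W * sqrt x) ` {0<..} = UNIV"
  proof (intro set_eqI iffI)
    fix t :: real
    define R where "R = sqrt (t\<^sup>2 + 4 * W)"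
    have "\<bar>t\<bar> < R"
      unfolding R_def using W real_sqrt_less_mono[of "t\<^sup>2" "t\<^sup>2 + 4 * W"] by simp
    then have "t + R > 0"
      by linarith
    have "R\<^sup>2 = t\<^sup>2 + 4 * W"
      unfolding R_def using W by simp
    define s where "s = 2 / (t + R)"
    have "s > 0"
      unfolding s_def using \<open>t + R > 0\<close> by simp
    have "1 / s - W * s = ((t + R)\<^sup>2 - 4 * W) / (2 * (t + R))"
      unfolding s_def using \<open>t + R > 0\<close> by (simp add: field_simps power2_eq_square)
    also have "(t + R)\<^sup>2 - 4 * W = t * (2 * (t + R))"
      using \<open>R\<^sup>2 = t\<^sup>2 + 4 * W\<close> by algebra
    finally have "1 / s - W * s = t"
      using \<open>t + R > 0\<close> by simp
    with \<open>s > 0\<close> show "t \<in> (\<lambda>x. 1 / sqrt x - W * sqrt x) ` {0<..}"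
      by (intro image_eqI[of _ _ "s\<^sup>2"]) auto
  qed auto
qed

lemma has_integral_affine_times_ig_density:
  assumes W: "W > 0"
  shows "((\<lambda>x. (1 + W * x) * ig_density (1/W) 1 x) has_integral 2) {0<..}"
proof -
  define g where "g = (\<lambda>x::real. 1 / sqrt x - W * sqrt x)"
  define g' where "g' x = - ((1 + W * x) / (2 * x * sqrt x))" for x :: real
  have der: "(g has_field_derivative g' x) (at x within {0<..})" if "x \<in> {0<..}" for x
    using that W unfolding g_def g'_def by (auto intro!: derivative_eq_intros simp: field_simps)
  have bij: "bij_betw g {0<..} UNIV"
    unfolding g_def using bij_betw_inv_sqrt_minus_sqrt[OF W] .
  have "(\<lambda>t::real. exp (- t\<^sup>2 / 2)) absolutely_integrable_on UNIV \<and>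
      integral UNIV (\<lambda>t::real. exp (- t\<^sup>2 / 2)) = sqrt (2 * pi)"
    using has_integral_exp_neg_square_half by (simp add: has_integral_iff_absolutely_integrable_nonneg)
  then have "(\<lambda>x. \<bar>g' x\<bar> * exp (- (g x)\<^sup>2 / 2)) absolutely_integrable_on {0<..} \<and>
      integral {0<..} (\<lambda>x. \<bar>g' x\<bar> * exp (- (g x)\<^sup>2 / 2)) = sqrt (2 * pi)"
    using has_absolute_integral_change_of_variables_1'[OF _ der bij_betw_imp_inj_on[OF bij],
        of "\<lambda>t. exp (- t\<^sup>2 / 2)"] bij_betw_imp_surj_on[OF bij]
    by simp
  then have "((\<lambda>x. \<bar>g' x\<bar> * exp (- (g x)\<^sup>2 / 2)) has_integral sqrt (2 * pi)) {0<..}"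
    by (simp add: has_integral_iff_absolutely_integrable_nonneg)
  moreover have "\<bar>g' x\<bar> * exp (- (g x)\<^sup>2 / 2) = sqrt (2 * pi) / 2 * ((1 + W * x) * ig_density (1/W) 1 x)"
    if "x \<in> {0<..}" for x
  proof -
    have "- (g x)\<^sup>2 / 2 = (W - W\<^sup>2 * x / 2) + - 1 / (2 * x)"
      using that W unfolding g_def by (simp add: field_simps power2_eq_square)
    then have "exp (- (g x)\<^sup>2 / 2) = exp (W - W\<^sup>2 * x / 2) * exp (- 1 / (2 * x))"
      by (simp only: exp_add)
    moreover have "\<bar>g' x\<bar> = (1 + W * x) / (2 * x * sqrt x)"
      using that W unfolding g'_def abs_minus_cancel by (intro abs_of_pos) (simp add: add_pos_nonneg)
    ultimately show ?thesis
      using that W by (simp add: ig_density_eq_tilted_levy levy_density_def)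
  qed
  ultimately have "((\<lambda>x. sqrt (2 * pi) / 2 * ((1 + W * x) * ig_density (1/W) 1 x)) has_integral sqrt (2 * pi)) {0<..}"
    by (rule has_integral_eq[rotated])
  then show ?thesis
    by (subst (asm) has_integral_mult_right_iff) auto
qed

lemma has_integral_ig_density:
  assumes W: "W > 0"
  shows "(ig_density (1/W) 1 has_integral 1) {0<..}"
    and "((\<lambda>x. x * ig_density (1/W) 1 x) has_integral 1 / W) {0<..}"
proof -
  let ?f = "ig_density (1/W) 1"
  have affine: "((\<lambda>x. (1 + W * x) * ?f x) has_integral 2) {0<..}"
    using has_integral_affine_times_ig_density[OF W] .
  have "?f absolutely_integrable_on {0<..}"
  proof (rule measurable_bounded_by_integrable_imp_absolutely_integrable)
    show "?f \<in> borel_measurable (lebesgue_on {0<..})"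
      by (simp add: measurable_completion measurable_restrict_space1)
    show "(\<lambda>x. (1 + W * x) * ?f x) integrable_on {0<..}"
      using affine by blast
    show "norm (?f x) \<le> (1 + W * x) * ?f x" if "x \<in> {0<..}" for x
      using that W ig_density_nonneg[of 1 "1/W" x] by (simp add: algebra_simps)
  qed simp
  then obtain I where f: "(?f has_integral I) {0<..}"
    using set_lebesgue_integral_eq_integral(1) by blast
  have "((\<lambda>y. 1 / W\<^sup>2 / y\<^sup>2 * ?f (1 / W\<^sup>2 / y)) has_integral I) {0<..}"
    using W by (intro has_integral_inversion_nonneg[THEN iffD2, OF _ _ f]) (simp_all add: ig_density_nonneg)
  moreover have "1 / W\<^sup>2 / y\<^sup>2 * ?f (1 / W\<^sup>2 / y) = W * (y * ?f y)" if "y \<in> {0<..}" for y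
    using ig_density_reflect[OF W, of y] that W by (simp add: power2_eq_square power3_eq_cube)
  ultimately have xf: "((\<lambda>x. W * (x * ?f x)) has_integral I) {0<..}"
    by (rule has_integral_eq[rotated])
  have "((\<lambda>x. (1 + W * x) * ?f x) has_integral I + I) {0<..}"
    using has_integral_add[OF f xf] by (simp add: algebra_simps)
  then have "I + I = 2"
    using affine by (rule has_integral_unique)
  then have "I = 1"
    by simp
  then show "(?f has_integral 1) {0<..}"
    using f by simp
  show "((\<lambda>x. x * ?f x) has_integral 1 / W) {0<..}"
    using xf \<open>I = 1\<close> W by (simp add: has_integral_mult_right_iff)
qed

definition ig_moment :: "real \<Rightarrow> real \<Rightarrow> real" where
  "ig_moment W a = integral {0<..} (\<lambda>x. ig_density (1/W) 1 x * x powr a)"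

lemma ig_density_powr_le_tangent:
  assumes W: "W > 0" and x: "x > 0" and a: "0 \<le> a" "a \<le> 1"
  shows "ig_density (1/W) 1 x * x powr a
    \<le> W powr - a * ((1 - a) * ig_density (1/W) 1 x + a * W * (x * ig_density (1/W) 1 x))"
proof -
  have "(W * x) powr a * 1 powr (1 - a) \<le> a * (W * x) + (1 - a) * 1"
    using W x a by (intro Youngs_inequality_0) auto
  then have "x powr a \<le> W powr - a * ((1 - a) + a * W * x)"
    using W x by (simp add: powr_mult powr_minus field_simps)
  then have "ig_density (1/W) 1 x * x powr a \<le> ig_density (1/W) 1 x * (W powr - a * ((1 - a) + a * W * x))"
    by (rule mult_left_mono) (simp add: ig_density_nonneg)
  then show ?thesis
    by (simp add: algebra_simps)
qed

lemma has_integral_ig_density_tangent: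
  assumes "W > 0"
  shows "((\<lambda>x. W powr - a * ((1 - a) * ig_density (1/W) 1 x + a * W * (x * ig_density (1/W) 1 x)))
           has_integral W powr - a) {0<..}"
  using has_integral_add[OF has_integral_mult_right[OF has_integral_ig_density(1)[OF assms], of "1 - a"]
      has_integral_mult_right[OF has_integral_ig_density(2)[OF assms], of "a * W"]]
  by (rule has_integral_mult_right[of _ _ _ "W powr - a", THEN has_integral_eq_rhs]) (use assms in simp)

lemma ig_density_powr_absolutely_integrable:
  assumes "W > 0" "0 \<le> a" "a \<le> 1"
  shows "(\<lambda>x. ig_density (1/W) 1 x * x powr a) absolutely_integrable_on {0<..}"
proof (rule measurable_bounded_by_integrable_imp_absolutely_integrable)
  show "(\<lambda>x. ig_density (1/W) 1 x * x powr a) \<in> borel_measurable (lebesgue_on {0<..})"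
    by (simp add: measurable_completion measurable_restrict_space1)
  show "norm (ig_density (1/W) 1 x * x powr a)
      \<le> W powr - a * ((1 - a) * ig_density (1/W) 1 x + a * W * (x * ig_density (1/W) 1 x))"
    if "x \<in> {0<..}" for x
    using that assms ig_density_powr_le_tangent[of W x a] ig_density_nonneg[of 1 "1/W" x] by simp
qed (use has_integral_ig_density_tangent[OF \<open>W > 0\<close>] in auto)

lemma has_integral_ig_moment:
  assumes "W > 0" "0 \<le> a" "a \<le> 1"
  shows "((\<lambda>x. ig_density (1/W) 1 x * x powr a) has_integral ig_moment W a) {0<..}"
  unfolding ig_moment_def
  using ig_density_powr_absolutely_integrable[OF assms]
  by (intro integrable_integral) (rule set_lebesgue_integral_eq_integral(1))

lemma ig_moment_le_powr:
  assumes "W > 0" "0 \<le> a" "a \<le> 1"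
  shows "ig_moment W a \<le> W powr - a"
  using has_integral_ig_moment[OF assms] has_integral_ig_density_tangent[OF \<open>W > 0\<close>, of a]
  by (rule has_integral_le) (use ig_density_powr_le_tangent assms in auto)

lemma ig_density_single_crossing:
  assumes V: "0 < V" "V \<le> W" and a: "0 \<le> a" and x: "x > 0"
  shows "(ig_density (1/W) 1 x - ig_density (1/V) 1 x) * (x powr a - (2 / (W + V)) powr a) \<le> 0"
proof -
  define E where "E = exp (W - W\<^sup>2 * x / 2) - exp (V - V\<^sup>2 * x / 2)"
  have exponent_diff: "(W - W\<^sup>2 * x / 2) - (V - V\<^sup>2 * x / 2) = (W - V) * (1 - (W + V) * x / 2)"
    by (simp add: field_simps power2_eq_square)
  have "E * (x powr a - (2 / (W + V)) powr a) \<le> 0"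
  proof (cases "x \<le> 2 / (W + V)")
    case True
    then have "0 \<le> (W - V) * (1 - (W + V) * x / 2)"
      using V by (intro mult_nonneg_nonneg) (auto simp: field_simps)
    then have "0 \<le> E"
      using exponent_diff unfolding E_def by simp
    moreover have "x powr a \<le> (2 / (W + V)) powr a"
      using True x a by (intro powr_mono2) auto
    ultimately show ?thesis
      by (simp add: mult_nonneg_nonpos)
  next
    case False
    then have "(W - V) * (1 - (W + V) * x / 2) \<le> 0"
      using V by (intro mult_nonneg_nonpos) (auto simp: field_simps)
    then have "E \<le> 0"
      using exponent_diff unfolding E_def by simp
    moreover have "(2 / (W + V)) powr a \<le> x powr a"
      using False V a by (intro powr_mono2) auto
    ultimately show ?thesis
      by (simp add: mult_nonpos_nonneg)
  qed
  moreover have "ig_density (1/W) 1 x - ig_density (1/V) 1 x = levy_density x * E"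
    using V x unfolding E_def by (simp add: ig_density_eq_tilted_levy algebra_simps)
  moreover have "levy_density x > 0"
    using x by (simp add: levy_density_def)
  ultimately show ?thesis
    by (simp add: mult.assoc mult_nonneg_nonpos)
qed

lemma ig_moment_antimono:
  assumes V: "0 < V" "V \<le> W" and a: "0 \<le> a" "a \<le> 1"
  shows "ig_moment W a \<le> ig_moment V a"
proof -
  have W: "W > 0"
    using V by simp
  define c where "c = (2 / (W + V)) powr a"
  have "((\<lambda>x. ig_density (1/V) 1 x * x powr a + c * (ig_density (1/W) 1 x - ig_density (1/V) 1 x))
          has_integral ig_moment V a + c * (1 - 1)) {0<..}"
    using W V by (intro has_integral_add has_integral_mult_right has_integral_diff has_integral_ig_moment
        has_integral_ig_density a) auto
  moreover have "ig_density (1/W) 1 x * x powr a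
      \<le> ig_density (1/V) 1 x * x powr a + c * (ig_density (1/W) 1 x - ig_density (1/V) 1 x)"
    if "x \<in> {0<..}" for x
    using ig_density_single_crossing[OF V a(1), of x] that unfolding c_def by (simp add: algebra_simps)
  ultimately show ?thesis
    using has_integral_ig_moment[OF W a] by (auto intro: has_integral_le)
qed

lemma levy_density_inversion_powr:
  assumes y: "y > 0"
  shows "1 / 2 / y\<^sup>2 * (levy_density (1 / 2 / y) * (1 / 2 / y) powr a)
    = 2 powr - a / sqrt pi * (y powr (1/2 - a - 1) / exp y)"
proof -
  have levy: "levy_density (1 / 2 / y) = exp (- y) * (2 * y) * sqrt (2 * y) / sqrt (2 * pi)"
    using y by (simp add: levy_density_def real_sqrt_divide field_simps)
  have scale: "(1 / 2 / y) powr a = 1 / (2 powr a * y powr a)"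
    using y by (simp add: powr_divide powr_mult)
  have gamma_weight: "y powr (1/2 - a - 1) = sqrt y / y powr a / y"
    using y by (simp only: powr_diff) (simp add: powr_half_sqrt)
  show ?thesis
    unfolding levy scale gamma_weight
    using y by (simp add: real_sqrt_mult exp_minus powr_minus field_simps power2_eq_square)
qed

lemma has_integral_levy_density_powr:
  assumes "a < 1/2"
  shows "((\<lambda>x. levy_density x * x powr a) has_integral C_const a) {0<..}"
proof -
  have "((\<lambda>t. t powr (1/2 - a - 1) / exp t) has_integral Gamma (1/2 - a)) {0..}"
    using assms by (intro Gamma_integral_real) simp
  then have "((\<lambda>t. t powr (1/2 - a - 1) / exp t) has_integral Gamma (1/2 - a)) {0<..}"
    by (rule has_integral_spike_set_eq[THEN iffD1, rotated -1])
      (auto intro: negligible_subset[OF negligible_sing, of _ 0])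
  from has_integral_mult_right[OF this, of "2 powr - a / sqrt pi"]
  have "((\<lambda>y. 2 powr - a / sqrt pi * (y powr (1/2 - a - 1) / exp y)) has_integral C_const a) {0<..}"
    unfolding C_const_def by simp
  then have "((\<lambda>y. 1 / 2 / y\<^sup>2 * (levy_density (1 / 2 / y) * (1 / 2 / y) powr a)) has_integral C_const a) {0<..}"
    by (rule has_integral_eq[rotated]) (rule levy_density_inversion_powr[symmetric], simp)
  then show ?thesis
    by (subst (asm) has_integral_inversion_nonneg) (auto simp: levy_density_def)
qed

lemma ig_density_le_exp_levy_density:
  assumes "W > 0" "x > 0"
  shows "ig_density (1/W) 1 x \<le> exp W * levy_density x"
  unfolding ig_density_eq_tilted_levy[OF assms]
  by (rule mult_right_mono) (use assms in \<open>simp_all add: levy_density_def\<close>)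

lemma tendsto_ig_moment_at_right_0:
  assumes a: "0 \<le> a" "a < 1/2"
  shows "((\<lambda>W. ig_moment W a) \<longlongrightarrow> C_const a) (at_right 0)"
proof (rule tendsto_at_right_sequentially[of 0 1])
  fix S :: "nat \<Rightarrow> real"
  assume S: "\<And>n. 0 < S n" "\<And>n. S n < 1" and "S \<longlonglongrightarrow> 0"
  let ?levy = "\<lambda>x. levy_density x * x powr a"
  have "(\<lambda>n. integral {0<..} (\<lambda>x. ig_density (1 / S n) 1 x * x powr a)) \<longlonglongrightarrow> integral {0<..} ?levy"
  proof (rule dominated_convergence(2))
    show "(\<lambda>x. ig_density (1 / S n) 1 x * x powr a) integrable_on {0<..}" for n
      using has_integral_ig_moment[OF S(1) a(1)] a by auto
    show "(\<lambda>x. exp 1 * ?levy x) integrable_on {0<..}"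
      using has_integral_levy_density_powr[OF a(2)] by (auto intro: integrable_on_cmult_left)
    show "norm (ig_density (1 / S n) 1 x * x powr a) \<le> exp 1 * ?levy x" if "x \<in> {0<..}" for n x
    proof -
      have "ig_density (1 / S n) 1 x \<le> exp (S n) * levy_density x"
        using that by (intro ig_density_le_exp_levy_density S(1)) simp
      also have "\<dots> \<le> exp 1 * levy_density x"
        using S(2)[of n] that by (intro mult_right_mono) (auto simp: levy_density_def)
      finally have "ig_density (1 / S n) 1 x * x powr a \<le> exp 1 * levy_density x * x powr a"
        by (rule mult_right_mono) simp
      then show ?thesis
        by (simp add: ig_density_nonneg mult.assoc)
    qed
    show "(\<lambda>n. ig_density (1 / S n) 1 x * x powr a) \<longlonglongrightarrow> ?levy x" if "x \<in> {0<..}" for x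
    proof -
      have "(\<lambda>n. exp (S n - (S n)\<^sup>2 * x / 2) * ?levy x) \<longlonglongrightarrow> exp (0 - 0\<^sup>2 * x / 2) * ?levy x"
        by (intro tendsto_intros \<open>S \<longlonglongrightarrow> 0\<close>) simp
      then show ?thesis
        using that ig_density_eq_tilted_levy[OF S(1)] by (simp add: mult.assoc)
    qed
  qed
  then show "(\<lambda>n. ig_moment (S n) a) \<longlonglongrightarrow> C_const a"
    using has_integral_levy_density_powr[OF a(2)] by (simp add: ig_moment_def integral_unique)
qed simp

lemma ig_moment_le_C_const:
  assumes "W > 0" "0 \<le> a" "a < 1/2"
  shows "ig_moment W a \<le> C_const a"
proof (rule tendsto_lowerbound[OF tendsto_ig_moment_at_right_0])
  show "\<forall>\<^sub>F V in at_right 0. ig_moment W a \<le> ig_moment V a"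
    using assms by (intro eventually_at_rightI[of 0 W]) (auto intro: ig_moment_antimono)
qed (use assms in auto)

lemma has_bochner_integral_IG_powr:
  assumes "W > 0" "0 \<le> a" "a \<le> 1"
  shows "has_bochner_integral (IG (1 / W) 1) (\<lambda>x. x powr a) (ig_moment W a)"
  unfolding ig_moment_def
  by (rule has_bochner_integral_IG) (use ig_density_powr_absolutely_integrable[OF assms] in auto)

theorem lemmaA2:
  shows "(\<forall>W::real. \<forall>\<alpha>::real. W > 0 \<and> 0 \<le> \<alpha> \<and> \<alpha> \<le> 1 \<longrightarrow>
            integrable (IG (1 / W) 1) (\<lambda>x. x powr \<alpha>) \<and>
            (\<integral>x. x powr \<alpha> \<partial>IG (1 / W) 1) \<le> W powr (- \<alpha>))
       \<and> (\<forall>\<alpha>::real. 0 \<le> \<alpha> \<and> \<alpha> < 1/2 \<longrightarrow>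
            (\<forall>W::real. W > 0 \<longrightarrow> (\<integral>x. x powr \<alpha> \<partial>IG (1 / W) 1) \<le> C_const \<alpha>) \<and>
            ((\<lambda>W. \<integral>x. x powr \<alpha> \<partial>IG (1 / W) 1) \<longlongrightarrow> C_const \<alpha>) (at_right 0))"
proof (intro conjI allI impI)
  fix W \<alpha> :: real
  assume "0 < W \<and> 0 \<le> \<alpha> \<and> \<alpha> \<le> 1"
  then have "has_bochner_integral (IG (1 / W) 1) (\<lambda>x. x powr \<alpha>) (ig_moment W \<alpha>)"
    and "ig_moment W \<alpha> \<le> W powr - \<alpha>"
    by (simp_all add: has_bochner_integral_IG_powr ig_moment_le_powr)
  then show "integrable (IG (1 / W) 1) (\<lambda>x. x powr \<alpha>)"
    and "(\<integral>x. x powr \<alpha> \<partial>IG (1 / W) 1) \<le> W powr - \<alpha>"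
    by (auto simp: has_bochner_integral_iff)
next
  fix \<alpha> W :: real
  assume "0 \<le> \<alpha> \<and> \<alpha> < 1/2" and "0 < W"
  then show "(\<integral>x. x powr \<alpha> \<partial>IG (1 / W) 1) \<le> C_const \<alpha>"
    using has_bochner_integral_IG_powr[of W \<alpha>] ig_moment_le_C_const[of W \<alpha>]
    by (simp add: has_bochner_integral_iff)
next
  fix \<alpha> :: real
  assume \<alpha>: "0 \<le> \<alpha> \<and> \<alpha> < 1/2"
  have moments_agree: "\<forall>\<^sub>F W in at_right 0. ig_moment W \<alpha> = (\<integral>x. x powr \<alpha> \<partial>IG (1 / W) 1)"
    using eventually_at_right_less[of "0::real"]
    by eventually_elim (use \<alpha> has_bochner_integral_IG_powr in \<open>simp add: has_bochner_integral_iff\<close>)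
  have "((\<lambda>W. ig_moment W \<alpha>) \<longlongrightarrow> C_const \<alpha>) (at_right 0)"
    using \<alpha> by (simp add: tendsto_ig_moment_at_right_0)
  then show "((\<lambda>W. \<integral>x. x powr \<alpha> \<partial>IG (1 / W) 1) \<longlongrightarrow> C_const \<alpha>) (at_right 0)"
    by (rule tendsto_cong[OF moments_agree, THEN iffD1])
qed

end
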